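(* Let $M$ be a $\Lambda_{\mathrm{NF}}$-inhabitant of the formula $\phi$. If $M$ is not locally compact, then there exist two addresses $b<b'$ in $\mathrm{dom}(M)$ such that $M|_b$ and $M|_{b'}$ are of the same kind and $\mathrm{Free}(M|_b)=\mathrm{Free}(M|_{b'})$. Moreover, $M$ is then not a $\Lambda_{\mathrm{NF}}$-inhabitant of $\phi$ of minimal size (size meaning $|\mathrm{dom}(M)|$).
   Context: Formulas are built from atoms with $\to$; $\mathrm{Sub}(\phi)$ is the set of subformulas of $\phi$. Let $\mathcal X$ be a countably infinite set of variables with an injective map $\mathcal O:\mathcal X\to\mathbb N$; $x<y$ iff $\mathcal O(x)<\mathcal O(y)$. Terms are pure $\lambda$-terms over $\mathcal X$, not identified up to $\alpha$-conversion; no two $\lambda$'s bind the same variable and no variable is both free and bound. $\mathrm{Free}(M)$ is the strictly increasing sequence of free variables of $M$. HRM terms: variables; $\lambda x.M$ with $M$ HRM and $x$ the greatest free variable of $M$; $(MN)$ with $M,N$ HRM and every free variable of $M$ $\le$ some free variable of $N$. Fix $\Omega$ from variables to formulas with each $\Omega^{-1}(\phi)$ infinite. Typing: $x:\Omega(x)$; $\lambda x.M:\chi\to\psi$ if $x:\chi$, $M:\psi$, $\lambda x.M$ HRM; $(MN):\psi$ if $M:\chi\to\psi$, $N:\chi$, $(MN)$ HRM. $\Lambda_{\mathrm{NF}}$ is the set of typed $\beta$-normal terms; a $\Lambda_{\mathrm{NF}}$-inhabitant of $\phi$ is a closed term of $\Lambda_{\mathrm{NF}}$ of type $\phi$. Two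 terms of $\Lambda_{\mathrm{NF}}$ are of the same kind if both are variables, or both applications, or both abstractions, and they have the same type. Addresses are finite sequences of positive integers with prefix order $\le$ ($<$ strict), concatenation $\cdot$, empty address $\varepsilon$. Terms are identified with trees: $x$ is $\varepsilon\mapsto x$; $\lambda x.M$ maps $\varepsilon$ to $\lambda x$ with subtree $M$ at $(1)$; $(M_1M_2)$ maps $\varepsilon$ to $@$ with subtrees at $(1),(2)$; $M|_a$ is the subterm at $a$. For a partial tree $\pi$, $\pi|_a$ is $c\mapsto\pi(a\cdot c)$. Let $\mathfrak S$ consist of all formulas (arity 0) and symbols $@_\phi$ (arity 2). A blueprint is a finite partial tree with values in $\mathfrak S$ such that if $\alpha(a)=@_\phi$ then $\alpha|_{a\cdot(1)},\alpha|_{a\cdot(2)}$ have non-empty domains. The relative depth of an address $a$ in a blueprint $\alpha$ is the number of $b\in\mathrm{dom}(\alpha)$ with $b<a$; the relative depth of $\alpha$ is $0$ if $\alpha$ is empty and otherwise the maximal relative depth of an address of $\mathrm{dom}(\alpha)$. The stable part of $M\in\Lambda_{\mathrm{NF}}$ is the set of $a\in\mathrm{dom}(M)$ with $\mathrm{Free}(M|_a)\subseteq\mathrm{Free}(M)$ and $M|_a$ a variable or an application; the blueprint of $M$ maps each $a$ in the stable part to $\psi$ if $M|_a$ is a variable of type $\psi$ and to $@_\psi$ if $M|_a$ is an application of type $\psi$. For $a\in\mathrm{dom}(M)$, $\Lambda(M,a)$ is the sequence $(x_1,\dots,x_k)$ of variables such that $(\lambda x_1,\dots,\lambda x_k)$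 are, in order, the labels of the form $\lambda x$ of $M$ at the prefixes of $a$ (including $a$). A $\Lambda_{\mathrm{NF}}$-inhabitant $M$ of $\phi$ is locally compact if for every $a\in\mathrm{dom}(M)$ the blueprint of $M|_a$ has relative depth at most $|\Lambda(M,a)|\times|\mathrm{Sub}(\phi)|$. *)

theory Defs
  imports Main "HOL-Library.Sublist"
begin

datatype 'a form = Atom 'a | Imp "'a form" "'a form"

fun Sub :: "'a form \<Rightarrow> 'a form set" where
  "Sub (Atom p) = {Atom p}"
| "Sub (Imp A B) = insert (Imp A B) (Sub A \<union> Sub B)"

section \<open>Terms (not identified up to alpha-conversion)\<close>

datatype 'v trm = Var 'v | Lam 'v "'v trm" | App "'v trm" "'v trm"

fun fvl :: "'v trm \<Rightarrow> 'v list" where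
  "fvl (Var x) = [x]"
| "fvl (Lam x M) = filter (\<lambda>y. y \<noteq> x) (fvl M)"
| "fvl (App M N) = fvl M @ fvl N"

definition fv :: "'v trm \<Rightarrow> 'v set" where
  "fv M = set (fvl M)"

definition Free :: "('v \<Rightarrow> nat) \<Rightarrow> 'v trm \<Rightarrow> 'v list" where
  "Free ord M = sort_key ord (remdups (fvl M))"

fun binders :: "'v trm \<Rightarrow> 'v list" where
  "binders (Var x) = []"
| "binders (Lam x M) = x # binders M"
| "binders (App M N) = binders M @ binders N"

text \<open>Standing convention: no two lambdas bind the same variable, and no variable
  is both free and bound.\<close>
definition wf_binders :: "'v trm \<Rightarrow> bool" where
  "wf_binders M \<longleftrightarrow> distinct (binders M) \<and> set (binders M) \<inter> fv M = {}"

text \<open>HRM terms, with x < y iff ord x < ord y.\<close>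
fun HRM :: "('v \<Rightarrow> nat) \<Rightarrow> 'v trm \<Rightarrow> bool" where
  "HRM ord (Var x) = True"
| "HRM ord (Lam x M) \<longleftrightarrow> HRM ord M \<and> x \<in> fv M \<and> (\<forall>y\<in>fv M. ord y \<le> ord x)"
| "HRM ord (App M N) \<longleftrightarrow> HRM ord M \<and> HRM ord N \<and> (\<forall>y\<in>fv M. \<exists>z\<in>fv N. ord y \<le> ord z)"

inductive typed :: "('v \<Rightarrow> nat) \<Rightarrow> ('v \<Rightarrow> 'a form) \<Rightarrow> 'v trm \<Rightarrow> 'a form \<Rightarrow> bool"
  for ord :: "'v \<Rightarrow> nat" and \<Omega> :: "'v \<Rightarrow> 'a form" where
  tVar: "typed ord \<Omega> (Var x) (\<Omega> x)"
| tLam: "typed ord \<Omega> M \<psi> \<Longrightarrow> HRM ord (Lam x M) \<Longrightarrow> typed ord \<Omega> (Lam x M) (Imp (\<Omega> x) \<psi>)"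
| tApp: "typed ord \<Omega> M (Imp \<chi> \<psi>) \<Longrightarrow> typed ord \<Omega> N \<chi> \<Longrightarrow> HRM ord (App M N)
          \<Longrightarrow> typed ord \<Omega> (App M N) \<psi>"

fun beta_normal :: "'v trm \<Rightarrow> bool" where
  "beta_normal (Var x) = True"
| "beta_normal (Lam x M) = beta_normal M"
| "beta_normal (App M N) \<longleftrightarrow> (\<forall>y P. M \<noteq> Lam y P) \<and> beta_normal M \<and> beta_normal N"

definition LambdaNF :: "('v \<Rightarrow> nat) \<Rightarrow> ('v \<Rightarrow> 'a form) \<Rightarrow> 'v trm \<Rightarrow> bool" where
  "LambdaNF ord \<Omega> M \<longleftrightarrow> wf_binders M \<and> beta_normal M \<and> (\<exists>\<tau>. typed ord \<Omega> M \<tau>)"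

definition inhabitant :: "('v \<Rightarrow> nat) \<Rightarrow> ('v \<Rightarrow> 'a form) \<Rightarrow> 'v trm \<Rightarrow> 'a form \<Rightarrow> bool" where
  "inhabitant ord \<Omega> M \<phi> \<longleftrightarrow> LambdaNF ord \<Omega> M \<and> fv M = {} \<and> typed ord \<Omega> M \<phi>"

definition same_kind :: "('v \<Rightarrow> nat) \<Rightarrow> ('v \<Rightarrow> 'a form) \<Rightarrow> 'v trm \<Rightarrow> 'v trm \<Rightarrow> bool" where
  "same_kind ord \<Omega> M N \<longleftrightarrow>
     ((\<exists>x y. M = Var x \<and> N = Var y) \<or> (\<exists>M1 M2 N1 N2. M = App M1 M2 \<and> N = App N1 N2)
       \<or> (\<exists>x M1 y N1. M = Lam x M1 \<and> N = Lam y N1))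
     \<and> (\<exists>\<tau>. typed ord \<Omega> M \<tau> \<and> typed ord \<Omega> N \<tau>)"

fun subt :: "'v trm \<Rightarrow> nat list \<Rightarrow> 'v trm option" where
  "subt M [] = Some M"
| "subt (Var x) (i # a) = None"
| "subt (Lam x M) (i # a) = (if i = 1 then subt M a else None)"
| "subt (App M N) (i # a) = (if i = 1 then subt M a else if i = 2 then subt N a else None)"

definition tdom :: "'v trm \<Rightarrow> nat list set" where
  "tdom M = {a. subt M a \<noteq> None}"

definition at :: "'v trm \<Rightarrow> nat list \<Rightarrow> 'v trm" (infixl "|@" 90) where
  "M |@ a = the (subt M a)"

text \<open>Lambda(M,a): variables of lambda labels at prefixes of a (including a), in order.\<close>
fun lams :: "'v trm \<Rightarrow> nat list \<Rightarrow> 'v list" where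
  "lams (Var x) a = []"
| "lams (Lam x M) [] = [x]"
| "lams (Lam x M) (i # a) = (if i = 1 then x # lams M a else [])"
| "lams (App M N) [] = []"
| "lams (App M N) (i # a) = (if i = 1 then lams M a else if i = 2 then lams N a else [])"

datatype 'a sym = SForm "'a form" | SApp "'a form"

type_synonym 'a ptree = "nat list \<Rightarrow> 'a sym option"

definition rel_depth_addr :: "'a ptree \<Rightarrow> nat list \<Rightarrow> nat" where
  "rel_depth_addr \<alpha> a = card {b \<in> dom \<alpha>. strict_prefix b a}"

definition rel_depth :: "'a ptree \<Rightarrow> nat" where
  "rel_depth \<alpha> = (if dom \<alpha> = {} then 0 else Max (rel_depth_addr \<alpha> ` dom \<alpha>))"

definition stable_part :: "('v \<Rightarrow> nat) \<Rightarrow> 'v trm \<Rightarrow> nat list set" where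
  "stable_part ord M = {a \<in> tdom M. set (Free ord (M |@ a)) \<subseteq> set (Free ord M)
       \<and> ((\<exists>x. M |@ a = Var x) \<or> (\<exists>P Q. M |@ a = App P Q))}"

definition blueprint :: "('v \<Rightarrow> nat) \<Rightarrow> ('v \<Rightarrow> 'a form) \<Rightarrow> 'v trm \<Rightarrow> 'a ptree" where
  "blueprint ord \<Omega> M a =
     (if a \<in> stable_part ord M then
        (case M |@ a of
           Var x \<Rightarrow> Some (SForm (THE \<tau>. typed ord \<Omega> (M |@ a) \<tau>))
         | App P Q \<Rightarrow> Some (SApp (THE \<tau>. typed ord \<Omega> (M |@ a) \<tau>))
         | Lam y P \<Rightarrow> None)
      else None)"

definition locally_compact :: "('v \<Rightarrow> nat) \<Rightarrow> ('v \<Rightarrow> 'a form) \<Rightarrow> 'v trm \<Rightarrow> 'a form \<Rightarrow> bool" where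
  "locally_compact ord \<Omega> M \<phi> \<longleftrightarrow> inhabitant ord \<Omega> M \<phi> \<and>
     (\<forall>a \<in> tdom M. rel_depth (blueprint ord \<Omega> (M |@ a)) \<le> length (lams M a) * card (Sub \<phi>))"

end

theory Submission
  imports Defs
begin

text \<open>
  If \<open>M\<close> is not locally compact, some blueprint of a subterm \<open>N = M|\<^sub>a\<close> has an address
  \<open>c\<close> with more than \<open>|\<Lambda>(M,a)| \<times> |Sub \<phi>|\<close> stable strict prefixes. These prefixes are
  applications (a variable is a leaf), their free variables form a chain of nonempty subsets
  of \<open>Free(N) \<subseteq> \<Lambda>(M,a)\<close> (the binder conventions forbid recapturing a free variable of
  \<open>N\<close>), and their types are subformulas of \<open>\<phi>\<close>. By pigeonhole two of them, \<open>b < b'\<close>,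
  agree in free variables and type, and grafting \<open>M|\<^sub>b\<^sub>'\<close> at \<open>b\<close> gives a strictly
  smaller inhabitant of \<open>\<phi>\<close>.
\<close>

lemma fv_simps [simp]:
  "fv (Var x) = {x}" "fv (Lam x P) = fv P - {x}" "fv (App P Q) = fv P \<union> fv Q"
  by (auto simp: fv_def)

lemma set_Free: "set (Free ord t) = fv t"
  by (simp add: Free_def fv_def)

lemma Free_eqI: "inj ord \<Longrightarrow> fv s = fv t \<Longrightarrow> Free ord s = Free ord t"
  unfolding Free_def
  by (rule map_sorted_distinct_set_unique[where f = ord])
     (auto simp: fv_def distinct_map inj_on_def dest: injD)

lemma tdom_Var [simp]: "tdom (Var x) = {[]}"
  by (auto simp: tdom_def elim: subt.elims)

lemma tdom_Lam: "tdom (Lam x P) = insert [] ((#) 1 ` tdom P)"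
proof -
  have "a \<in> (#) 1 ` tdom P" if "subt (Lam x P) a \<noteq> None" "a \<noteq> []" for a
    using that by (cases a) (auto simp: tdom_def split: if_splits)
  then show ?thesis by (auto simp: tdom_def)
qed

lemma tdom_App: "tdom (App P Q) = insert [] ((#) 1 ` tdom P \<union> (#) 2 ` tdom Q)"
proof -
  have "a \<in> (#) 1 ` tdom P \<union> (#) 2 ` tdom Q" if "subt (App P Q) a \<noteq> None" "a \<noteq> []" for a
    using that by (cases a) (auto simp: tdom_def split: if_splits)
  then show ?thesis by (auto simp: tdom_def)
qed

lemma Nil_in_tdom [simp]: "[] \<in> tdom t"
  by (simp add: tdom_def)

lemma at_simps [simp]:
  "t |@ [] = t"
  "Lam x P |@ (Suc 0 # d) = P |@ d"
  "App P Q |@ (Suc 0 # d) = P |@ d"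
  "App P Q |@ (Suc (Suc 0) # d) = Q |@ d"
  by (auto simp: at_def)

lemma tdom_cases [consumes 1, case_names Nil Lam App1 App2]:
  assumes "d \<in> tdom t"
    and "d = [] \<Longrightarrow> thesis"
    and "\<And>x P d'. t = Lam x P \<Longrightarrow> d = 1 # d' \<Longrightarrow> d' \<in> tdom P \<Longrightarrow> thesis"
    and "\<And>P Q d'. t = App P Q \<Longrightarrow> d = 1 # d' \<Longrightarrow> d' \<in> tdom P \<Longrightarrow> thesis"
    and "\<And>P Q d'. t = App P Q \<Longrightarrow> d = 2 # d' \<Longrightarrow> d' \<in> tdom Q \<Longrightarrow> thesis"
  shows thesis
  using assms by (cases t) (auto simp: tdom_Lam tdom_App)

lemma subt_append: "subt t (b @ d) = (case subt t b of None \<Rightarrow> None | Some s \<Rightarrow> subt s d)"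
  by (induction t b rule: subt.induct) auto

lemma tdom_append: "b @ d \<in> tdom t \<longleftrightarrow> b \<in> tdom t \<and> d \<in> tdom (t |@ b)"
  by (auto simp: tdom_def at_def subt_append split: option.splits)

lemma at_append: "b \<in> tdom t \<Longrightarrow> t |@ (b @ d) = t |@ b |@ d"
  by (auto simp: tdom_def at_def subt_append split: option.splits)

lemma prefix_in_tdom: "prefix b c \<Longrightarrow> c \<in> tdom t \<Longrightarrow> b \<in> tdom t"
  by (auto simp: prefix_def tdom_append)

lemma strict_prefix_not_Var: "strict_prefix b c \<Longrightarrow> c \<in> tdom t \<Longrightarrow> t |@ b \<noteq> Var x"
  by (auto simp: strict_prefix_def prefix_def tdom_append neq_Nil_conv)

lemma finite_tdom: "finite (tdom t)"
  by (induction t) (auto simp: tdom_Lam tdom_App)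

lemma card_tdom: "card (tdom t) = size t"
proof (induction t)
  case (Lam x P)
  have "card ((#) 1 ` tdom P) = card (tdom P)"
    by (rule card_image) (auto simp: inj_on_def)
  then show ?case
    using Lam finite_tdom[of P] by (simp add: tdom_Lam card_insert_if image_iff)
next
  case (App P Q)
  have "card ((#) 1 ` tdom P) = card (tdom P)" "card ((#) 2 ` tdom Q) = card (tdom Q)"
    by (rule card_image; auto simp: inj_on_def)+
  then have "card ((#) 1 ` tdom P \<union> (#) 2 ` tdom Q) = card (tdom P) + card (tdom Q)"
    by (subst card_Un_disjoint) (auto simp: finite_tdom)
  then show ?case
    using App finite_tdom[of P] finite_tdom[of Q] by (simp add: tdom_App card_insert_if image_iff)
qed simp

lemma size_at_less: "d \<in> tdom t \<Longrightarrow> d \<noteq> [] \<Longrightarrow> size (t |@ d) < size t"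
proof (induction t arbitrary: d)
  case (Lam x P)
  from Lam.prems show ?case
    by (cases rule: tdom_cases) (use Lam.IH in \<open>fastforce simp: neq_Nil_conv\<close>)+
next
  case (App P Q)
  from App.prems show ?case
    by (cases rule: tdom_cases) (use App.IH in \<open>fastforce simp: neq_Nil_conv numeral_2_eq_2\<close>)+
qed simp

inductive_cases typed_VarE: "typed ord \<Omega> (Var x) \<tau>"
inductive_cases typed_LamE: "typed ord \<Omega> (Lam x M) \<tau>"
inductive_cases typed_AppE: "typed ord \<Omega> (App M N) \<tau>"

lemma typed_imp_HRM: "typed ord \<Omega> t \<tau> \<Longrightarrow> HRM ord t"
  by (induction rule: typed.induct) auto

lemma typed_unique: "typed ord \<Omega> t \<tau> \<Longrightarrow> typed ord \<Omega> t \<sigma> \<Longrightarrow> \<tau> = \<sigma>"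
proof (induction arbitrary: \<sigma> rule: typed.induct)
  case (tApp M \<chi> \<psi> N)
  then show ?case by (blast elim: typed_AppE)
qed (blast elim: typed_VarE typed_LamE)+

lemma typed_at: "typed ord \<Omega> t \<tau> \<Longrightarrow> d \<in> tdom t \<Longrightarrow> \<exists>\<sigma>. typed ord \<Omega> (t |@ d) \<sigma>"
proof (induction t arbitrary: \<tau> d)
  case (Lam x P)
  from Lam.prems(2) show ?case
  proof (cases rule: tdom_cases)
    case Nil
    then show ?thesis using Lam.prems(1) by auto
  qed (use Lam in \<open>auto elim!: typed_LamE\<close>)
next
  case (App P Q)
  from App.prems(2) show ?case
  proof (cases rule: tdom_cases)
    case Nil
    then show ?thesis using App.prems(1) by auto
  qed (use App in \<open>auto simp: numeral_2_eq_2 elim!: typed_AppE\<close>)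
qed auto

lemma beta_normal_at: "beta_normal t \<Longrightarrow> d \<in> tdom t \<Longrightarrow> beta_normal (t |@ d)"
proof (induction t arbitrary: d)
  case (Lam x P)
  from Lam.prems(2) show ?case by (cases rule: tdom_cases) (use Lam in auto)
next
  case (App P Q)
  from App.prems(2) show ?case
    by (cases rule: tdom_cases) (use App in \<open>auto simp: numeral_2_eq_2\<close>)
qed auto

lemma subseq_binders_at: "d \<in> tdom t \<Longrightarrow> subseq (binders (t |@ d)) (binders t)"
proof (induction t arbitrary: d)
  case (Lam x P)
  from Lam.prems show ?case by (cases rule: tdom_cases) (use Lam in auto)
next
  case (App P Q)
  from App.prems show ?case
    by (cases rule: tdom_cases)
       (use App in \<open>auto simp: numeral_2_eq_2 intro: list_emb_append_mono\<close>)
qed auto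

lemma fv_at_subset_binders: "d \<in> tdom t \<Longrightarrow> fv (t |@ d) \<subseteq> fv t \<union> set (binders t)"
proof (induction t arbitrary: d)
  case (Lam x P)
  from Lam.prems show ?case by (cases rule: tdom_cases) (use Lam in fastforce)+
next
  case (App P Q)
  from App.prems show ?case
    by (cases rule: tdom_cases) (use App in \<open>fastforce simp: numeral_2_eq_2\<close>)+
qed auto

lemma fv_at_subset_lams: "d \<in> tdom t \<Longrightarrow> fv (t |@ d) \<subseteq> fv t \<union> set (lams t d)"
proof (induction t arbitrary: d)
  case (Lam x P)
  from Lam.prems show ?case by (cases rule: tdom_cases) (use Lam in fastforce)+
next
  case (App P Q)
  from App.prems show ?case
    by (cases rule: tdom_cases) (use App in \<open>fastforce simp: numeral_2_eq_2\<close>)+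
qed auto

lemma wf_binders_at: "wf_binders t \<Longrightarrow> d \<in> tdom t \<Longrightarrow> wf_binders (t |@ d)"
proof (induction t arbitrary: d)
  case (Lam x P)
  then have "wf_binders P" by (auto simp: wf_binders_def)
  from Lam.prems(2) show ?case by (cases rule: tdom_cases) (use Lam \<open>wf_binders P\<close> in auto)
next
  case (App P Q)
  then have "wf_binders P" "wf_binders Q" by (auto simp: wf_binders_def)
  from App.prems(2) show ?case
    by (cases rule: tdom_cases)
       (use App \<open>wf_binders P\<close> \<open>wf_binders Q\<close> in \<open>auto simp: numeral_2_eq_2\<close>)
qed auto

lemma fv_at_prefix_mono:
  assumes "wf_binders t" "prefix b b'" "b' \<in> tdom t"
  shows "fv (t |@ b') \<inter> fv t \<subseteq> fv (t |@ b)"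
proof -
  obtain e where b': "b' = b @ e" using assms(2) by (auto simp: prefix_def)
  then have b: "b \<in> tdom t" and e: "e \<in> tdom (t |@ b)" using assms(3) tdom_append by auto
  have "fv (t |@ b') \<subseteq> fv (t |@ b) \<union> set (binders (t |@ b))"
    using fv_at_subset_binders[OF e] at_append[OF b] b' by simp
  moreover have "set (binders (t |@ b)) \<subseteq> set (binders t)"
    using subseq_binders_at[OF b] by (auto elim: list_emb_set)
  ultimately show ?thesis using assms(1) by (auto simp: wf_binders_def)
qed

lemma beta_normal_fv_nonempty: "beta_normal t \<Longrightarrow> \<forall>y P. t \<noteq> Lam y P \<Longrightarrow> fv t \<noteq> {}"
  by (induction t) auto

lemma Sub_refl: "\<tau> \<in> Sub \<tau>"
  by (cases \<tau>) auto

lemma Sub_trans: "\<sigma> \<in> Sub \<tau> \<Longrightarrow> Sub \<sigma> \<subseteq> Sub \<tau>"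
  by (induction \<tau>) auto

lemma finite_Sub: "finite (Sub \<tau>)"
  by (induction \<tau>) auto

lemma typed_head_Sub:
  "typed ord \<Omega> t \<tau> \<Longrightarrow> beta_normal t \<Longrightarrow> \<forall>y P. t \<noteq> Lam y P \<Longrightarrow> \<exists>h\<in>fv t. \<tau> \<in> Sub (\<Omega> h)"
proof (induction rule: typed.induct)
  case (tApp M \<chi> \<psi> N)
  then obtain h where "h \<in> fv M" "Imp \<chi> \<psi> \<in> Sub (\<Omega> h)" by auto
  then show ?case using Sub_trans Sub_refl[of \<psi>] by fastforce
qed (auto simp: Sub_refl)

lemma typed_at_Sub:
  assumes "typed ord \<Omega> t \<tau>" "beta_normal t" "d \<in> tdom t" "typed ord \<Omega> (t |@ d) \<sigma>"
  shows "\<sigma> \<in> Sub \<tau> \<union> (\<Union>x\<in>fv t. Sub (\<Omega> x))"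
  using assms
proof (induction t arbitrary: \<tau> d)
  case (Var x)
  then show ?case using typed_unique by (fastforce simp: Sub_refl)
next
  case (Lam x P)
  from Lam.prems(3) show ?case
  proof (cases rule: tdom_cases)
    case Nil
    then show ?thesis using Lam.prems typed_unique by (fastforce simp: Sub_refl)
  next
    case (Lam x' P' d')
    from Lam.prems(1) obtain \<psi> where "\<tau> = Imp (\<Omega> x) \<psi>" "typed ord \<Omega> P \<psi>"
      by (auto elim: typed_LamE)
    then show ?thesis using Lam Lam.IH[of \<psi> d'] Lam.prems by fastforce
  qed auto
next
  case (App P Q)
  from App.prems(1) obtain \<chi> where tP: "typed ord \<Omega> P (Imp \<chi> \<tau>)" and tQ: "typed ord \<Omega> Q \<chi>"
    by (auto elim: typed_AppE)
  from App.prems(2) have bn: "beta_normal P" "beta_normal Q" "\<forall>y R. P \<noteq> Lam y R" by auto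
  with tP obtain h where h: "h \<in> fv P" "Sub (Imp \<chi> \<tau>) \<subseteq> Sub (\<Omega> h)"
    using typed_head_Sub Sub_trans by metis
  from App.prems(3) show ?case
  proof (cases rule: tdom_cases)
    case Nil
    then show ?thesis using App.prems tP tQ typed_unique by (fastforce simp: Sub_refl)
  next
    case (App1 P' Q' d')
    then show ?thesis using App.IH(1)[OF tP bn(1)] App.prems(4) h by fastforce
  next
    case (App2 P' Q' d')
    then show ?thesis using App.IH(2)[OF tQ bn(2)] App.prems(4) h
      by (fastforce simp: numeral_2_eq_2)
  qed auto
qed

section \<open>Grafting a subterm\<close>

fun replace_at :: "'v trm \<Rightarrow> nat list \<Rightarrow> 'v trm \<Rightarrow> 'v trm" where
  "replace_at t [] s = s"
| "replace_at (Lam x P) (i # a) s = (if i = 1 then Lam x (replace_at P a s) else Lam x P)"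
| "replace_at (App P Q) (i # a) s =
     (if i = 1 then App (replace_at P a s) Q else if i = 2 then App P (replace_at Q a s) else App P Q)"
| "replace_at (Var x) (i # a) s = Var x"

lemma fv_replace_at: "b \<in> tdom t \<Longrightarrow> fv s = fv (t |@ b) \<Longrightarrow> fv (replace_at t b s) = fv t"
proof (induction t arbitrary: b)
  case (Lam x P)
  from Lam.prems(1) show ?case by (cases rule: tdom_cases) (use Lam in auto)
next
  case (App P Q)
  from App.prems(1) show ?case by (cases rule: tdom_cases) (use App in \<open>auto simp: numeral_2_eq_2\<close>)
qed auto

lemma typed_Lam_cong:
  assumes "typed ord \<Omega> (Lam x P) \<sigma>" "\<And>\<psi>. typed ord \<Omega> P \<psi> \<Longrightarrow> typed ord \<Omega> P' \<psi>" "fv P' = fv P"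
  shows "typed ord \<Omega> (Lam x P') \<sigma>"
proof -
  from assms(1) obtain \<psi> where "\<sigma> = Imp (\<Omega> x) \<psi>" "typed ord \<Omega> P \<psi>" "HRM ord (Lam x P)"
    by (auto elim: typed_LamE)
  with assms(2,3) typed_imp_HRM[of ord \<Omega> P' \<psi>] show ?thesis by (auto intro: typed.tLam)
qed

lemma typed_App_cong:
  assumes "typed ord \<Omega> (App P Q) \<sigma>"
    and "\<And>\<psi>. typed ord \<Omega> P \<psi> \<Longrightarrow> typed ord \<Omega> P' \<psi>" "\<And>\<psi>. typed ord \<Omega> Q \<psi> \<Longrightarrow> typed ord \<Omega> Q' \<psi>"
    and "fv P' = fv P" "fv Q' = fv Q"
  shows "typed ord \<Omega> (App P' Q') \<sigma>"
proof -
  from assms(1) obtain \<chi> where tP: "typed ord \<Omega> P (Imp \<chi> \<sigma>)" and tQ: "typed ord \<Omega> Q \<chi>"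
    and "HRM ord (App P Q)" by (auto elim: typed_AppE)
  moreover have "typed ord \<Omega> P' (Imp \<chi> \<sigma>)" "typed ord \<Omega> Q' \<chi>" using assms(2,3) tP tQ by blast+
  ultimately show ?thesis
    using assms(4,5) typed_imp_HRM[of ord \<Omega> P'] typed_imp_HRM[of ord \<Omega> Q'] by (auto intro: typed.tApp)
qed

lemma typed_replace_at:
  assumes "b \<in> tdom t" "typed ord \<Omega> t \<sigma>" "typed ord \<Omega> (t |@ b) \<tau>" "typed ord \<Omega> s \<tau>"
    and "fv s = fv (t |@ b)"
  shows "typed ord \<Omega> (replace_at t b s) \<sigma>"
  using assms
proof (induction t arbitrary: b \<sigma>)
  case (Var x)
  then show ?case using typed_unique by fastforce
next
  case (Lam x P)
  from Lam.prems(1) show ?case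
  proof (cases rule: tdom_cases)
    case Nil
    then show ?thesis using Lam.prems typed_unique by fastforce
  next
    case (Lam x' P' d')
    then have d': "d' \<in> tdom P" "typed ord \<Omega> (P |@ d') \<tau>" "fv s = fv (P |@ d')"
      using Lam.prems(3,5) by auto
    show ?thesis
      using typed_Lam_cong[OF Lam.prems(2) Lam.IH[OF d'(1) _ d'(2) Lam.prems(4) d'(3)]]
        fv_replace_at[OF d'(1,3)] Lam by simp
  qed simp_all
next
  case (App P Q)
  from App.prems(1) show ?case
  proof (cases rule: tdom_cases)
    case Nil
    then show ?thesis using App.prems typed_unique by fastforce
  next
    case (App1 P' Q' d')
    then have d': "d' \<in> tdom P" "typed ord \<Omega> (P |@ d') \<tau>" "fv s = fv (P |@ d')"
      using App.prems(3,5) by auto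
    show ?thesis
      using typed_App_cong[OF App.prems(2) App.IH(1)[OF d'(1) _ d'(2) App.prems(4) d'(3)]]
        fv_replace_at[OF d'(1,3)] App1 by simp
  next
    case (App2 P' Q' d')
    then have d': "d' \<in> tdom Q" "typed ord \<Omega> (Q |@ d') \<tau>" "fv s = fv (Q |@ d')"
      using App.prems(3,5) by (auto simp: numeral_2_eq_2)
    show ?thesis
      using typed_App_cong[OF App.prems(2) _ App.IH(2)[OF d'(1) _ d'(2) App.prems(4) d'(3)]]
        fv_replace_at[OF d'(1,3)] App2 by (simp add: numeral_2_eq_2)
  qed simp
qed

lemma beta_normal_replace_at:
  assumes "b \<in> tdom t" "beta_normal t" "beta_normal s"
    and "\<forall>y P. t |@ b \<noteq> Lam y P" "\<forall>y P. s \<noteq> Lam y P"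
  shows "beta_normal (replace_at t b s)"
  using assms
proof (induction t arbitrary: b)
  case (Lam x P)
  from Lam.prems(1) show ?case by (cases rule: tdom_cases) (use Lam in auto)
next
  case (App P Q)
  from App.prems(1) show ?case
  proof (cases rule: tdom_cases)
    case (App1 P' Q' d')
    \<comment> \<open>grafting strictly below the head keeps its constructor, so no redex is created\<close>
    have "\<forall>y R. replace_at P d' s \<noteq> Lam y R"
    proof (cases d')
      case Nil
      then show ?thesis using App.prems App1 by simp
    next
      case Cons
      then show ?thesis using App.prems(2) by (cases P) auto
    qed
    then show ?thesis using App.IH(1)[of d'] App.prems App1 by auto
  next
    case (App2 P' Q' d')
    then show ?thesis using App.IH(2)[of d'] App.prems by (auto simp: numeral_2_eq_2)
  qed (use App in auto)
qed auto

lemma subseq_binders_replace_at: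
  "b \<in> tdom t \<Longrightarrow> subseq (binders s) (binders (t |@ b)) \<Longrightarrow>
    subseq (binders (replace_at t b s)) (binders t)"
proof (induction t arbitrary: b)
  case (Lam x P)
  from Lam.prems(1) show ?case by (cases rule: tdom_cases) (use Lam in auto)
next
  case (App P Q)
  from App.prems(1) show ?case
    by (cases rule: tdom_cases)
       (use App in \<open>auto simp: numeral_2_eq_2 intro: list_emb_append_mono\<close>)
qed auto

lemma size_replace_at_less:
  "b \<in> tdom t \<Longrightarrow> size s < size (t |@ b) \<Longrightarrow> size (replace_at t b s) < size t"
proof (induction t arbitrary: b)
  case (Lam x P)
  from Lam.prems(1) show ?case by (cases rule: tdom_cases) (use Lam in auto)
next
  case (App P Q)
  from App.prems(1) show ?case by (cases rule: tdom_cases) (use App in \<open>auto simp: numeral_2_eq_2\<close>)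
qed auto

lemma distinct_subseq: "subseq xs ys \<Longrightarrow> distinct ys \<Longrightarrow> distinct xs"
  by (induction rule: list_emb.induct) (auto dest: list_emb_set)

lemma inhabitant_replace_at:
  assumes inh: "inhabitant ord \<Omega> t \<phi>" and b': "b' \<in> tdom t" and "prefix b b'"
    and not_Lam: "\<forall>y P. t |@ b \<noteq> Lam y P" "\<forall>y P. t |@ b' \<noteq> Lam y P"
    and "typed ord \<Omega> (t |@ b) \<tau>" "typed ord \<Omega> (t |@ b') \<tau>"
    and fv_eq: "fv (t |@ b') = fv (t |@ b)"
  shows "inhabitant ord \<Omega> (replace_at t b (t |@ b')) \<phi>"
proof -
  obtain d where b'_eq: "b' = b @ d" using \<open>prefix b b'\<close> by (auto simp: prefix_def)
  then have b: "b \<in> tdom t" and d: "d \<in> tdom (t |@ b)" using b' tdom_append by auto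
  have at_b': "t |@ b' = t |@ b |@ d" using at_append[OF b] b'_eq by simp
  from inh have tt: "typed ord \<Omega> t \<phi>" and fvt: "fv t = {}" and bnt: "beta_normal t"
    and wft: "wf_binders t" by (auto simp: inhabitant_def LambdaNF_def)
  let ?t' = "replace_at t b (t |@ b')"
  have "typed ord \<Omega> ?t' \<phi>"
    using typed_replace_at[OF b tt] assms(6,7) fv_eq by auto
  moreover have fv': "fv ?t' = {}" using fv_replace_at[OF b] fv_eq fvt by auto
  moreover have "beta_normal ?t'"
    using beta_normal_replace_at[OF b bnt] beta_normal_at[OF bnt b'] not_Lam by auto
  moreover have "wf_binders ?t'"
  proof -
    have "subseq (binders ?t') (binders t)"
      using subseq_binders_replace_at[OF b] subseq_binders_at[OF d] at_b' by auto
    then show ?thesis using wft fv' distinct_subseq by (auto simp: wf_binders_def)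
  qed
  ultimately show ?thesis by (auto simp: inhabitant_def LambdaNF_def)
qed

lemma card_tdom_replace_at_less:
  assumes "strict_prefix b b'" "b' \<in> tdom t"
  shows "card (tdom (replace_at t b (t |@ b'))) < card (tdom t)"
proof -
  obtain d where b'_eq: "b' = b @ d" and "d \<noteq> []"
    using assms(1) by (auto simp: strict_prefix_def prefix_def)
  then have b: "b \<in> tdom t" and "d \<in> tdom (t |@ b)" using assms(2) tdom_append by auto
  then have "size (t |@ b') < size (t |@ b)"
    using size_at_less \<open>d \<noteq> []\<close> at_append[OF b] b'_eq by simp
  then show ?thesis using size_replace_at_less[OF b] card_tdom by metis
qed

section \<open>Long chains of stable applications\<close>

lemma card_chain_le:
  assumes "finite X" "\<forall>A\<in>F. A \<subseteq> X \<and> A \<noteq> {}" "\<forall>A\<in>F. \<forall>B\<in>F. A \<subseteq> B \<or> B \<subseteq> A"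
  shows "card F \<le> card X"
proof -
  have fin: "\<And>A. A \<in> F \<Longrightarrow> finite A" using assms(1,2) finite_subset by blast
  \<comment> \<open>members of a chain are determined by their cardinality, which lies in \<open>{1..card X}\<close>\<close>
  have "inj_on card F"
  proof (rule inj_onI)
    fix A B assume "A \<in> F" "B \<in> F" "card A = card B"
    then show "A = B" using assms(3) fin by (metis card_subset_eq)
  qed
  moreover have "card ` F \<subseteq> {1..card X}"
    using assms fin by (auto simp: card_mono Suc_leI card_gt_0_iff)
  then have "card (card ` F) \<le> card X"
    using card_mono[of "{1..card X}"] by fastforce
  ultimately show ?thesis by (simp add: card_image)
qed

lemma dom_blueprint: "dom (blueprint ord \<Omega> t) = stable_part ord t"
  unfolding blueprint_def stable_part_def by (auto split: trm.splits if_splits)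

lemma finite_stable_part: "finite (stable_part ord t)"
  by (rule finite_subset[OF _ finite_tdom[of t]]) (auto simp: stable_part_def)

lemma rel_depth_gtE:
  assumes "n < rel_depth (blueprint ord \<Omega> t)"
  obtains c where "c \<in> stable_part ord t" "n < card {b \<in> stable_part ord t. strict_prefix b c}"
proof -
  let ?\<alpha> = "blueprint ord \<Omega> t"
  have "dom ?\<alpha> \<noteq> {}" using assms by (auto simp: rel_depth_def)
  then have "rel_depth ?\<alpha> \<in> rel_depth_addr ?\<alpha> ` dom ?\<alpha>"
    unfolding rel_depth_def dom_blueprint using finite_stable_part[of ord t] by (simp add: Max_in)
  then obtain c where "c \<in> stable_part ord t" "rel_depth ?\<alpha> = rel_depth_addr ?\<alpha> c"
    by (auto simp: dom_blueprint)
  then show ?thesis using that assms by (simp add: rel_depth_addr_def dom_blueprint)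
qed

lemma stable_strict_prefix_App:
  assumes "beta_normal t" "c \<in> tdom t" "b \<in> stable_part ord t" "strict_prefix b c"
  shows "\<exists>P Q. t |@ b = App P Q" "fv (t |@ b) \<subseteq> fv t" "fv (t |@ b) \<noteq> {}"
proof -
  have b: "b \<in> tdom t" and fv_sub: "set (Free ord (t |@ b)) \<subseteq> set (Free ord t)"
    and kind: "(\<exists>x. t |@ b = Var x) \<or> (\<exists>P Q. t |@ b = App P Q)"
    using assms(3) unfolding stable_part_def by blast+
  show app: "\<exists>P Q. t |@ b = App P Q" using kind strict_prefix_not_Var[OF assms(4,2)] by blast
  show "fv (t |@ b) \<subseteq> fv t" using fv_sub by (simp add: set_Free)
  show "fv (t |@ b) \<noteq> {}"
    using beta_normal_fv_nonempty[OF beta_normal_at[OF assms(1) b]] app by auto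
qed

text \<open>
  Stable strict prefixes of \<open>c\<close> are totally ordered, and the binder conventions make free
  variables of \<open>t\<close> decrease along them, so their free-variable sets form a chain.
\<close>
lemma card_fv_stable_prefixes_le:
  assumes wf: "wf_binders t" and bn: "beta_normal t" and c: "c \<in> tdom t"
  shows "card ((\<lambda>b. fv (t |@ b)) ` {b \<in> stable_part ord t. strict_prefix b c}) \<le> card (fv t)"
proof -
  define B where "B = {b \<in> stable_part ord t. strict_prefix b c}"
  have B_fv: "fv (t |@ b) \<subseteq> fv t" "fv (t |@ b) \<noteq> {}" if "b \<in> B" for b
    using stable_strict_prefix_App[OF bn c] that unfolding B_def by blast+
  have B_comparable: "prefix b1 b2 \<or> prefix b2 b1" if "b1 \<in> B" "b2 \<in> B" for b1 b2
    using that prefix_same_cases[of b1 c b2] by (auto simp: B_def strict_prefix_def)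
  have B_chain: "fv (t |@ b2) \<subseteq> fv (t |@ b1)" if "b2 \<in> B" "prefix b1 b2" for b1 b2
  proof -
    have "b2 \<in> tdom t" using that(1) c prefix_in_tdom by (auto simp: B_def strict_prefix_def)
    then show ?thesis using fv_at_prefix_mono[OF wf that(2)] B_fv(1)[OF that(1)] by blast
  qed
  show ?thesis unfolding B_def[symmetric]
  proof (rule card_chain_le)
    show "\<forall>A\<in>(\<lambda>b. fv (t |@ b)) ` B. A \<subseteq> fv t \<and> A \<noteq> {}" using B_fv by auto
    show "\<forall>A\<in>(\<lambda>b. fv (t |@ b)) ` B. \<forall>A'\<in>(\<lambda>b. fv (t |@ b)) ` B. A \<subseteq> A' \<or> A' \<subseteq> A"
      using B_comparable B_chain by blast
  qed (simp add: fv_def)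
qed

lemma stable_chain_repetition:
  assumes wf: "wf_binders t" and bn: "beta_normal t" and tt: "typed ord \<Omega> t \<tau>0"
    and c: "c \<in> stable_part ord t"
    and long: "card (fv t) * card S < card {b \<in> stable_part ord t. strict_prefix b c}"
    and "finite S" and types: "\<And>d \<sigma>. d \<in> tdom t \<Longrightarrow> typed ord \<Omega> (t |@ d) \<sigma> \<Longrightarrow> \<sigma> \<in> S"
  obtains b b' \<sigma> where "strict_prefix b b'" "b' \<in> tdom t"
    "\<exists>P Q. t |@ b = App P Q" "\<exists>P Q. t |@ b' = App P Q"
    "typed ord \<Omega> (t |@ b) \<sigma>" "typed ord \<Omega> (t |@ b') \<sigma>" "fv (t |@ b') = fv (t |@ b)"
proof -
  define B where "B = {b \<in> stable_part ord t. strict_prefix b c}"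
  define F where "F = (\<lambda>b. fv (t |@ b)) ` B"
  have cN: "c \<in> tdom t" using c by (auto simp: stable_part_def)
  have B_tdom: "b \<in> tdom t" if "b \<in> B" for b
    using that by (auto simp: B_def stable_part_def)
  have B_App: "\<exists>P Q. t |@ b = App P Q" if "b \<in> B" for b
    using stable_strict_prefix_App(1)[OF bn cN] that unfolding B_def by blast
  define ty where "ty b = (THE \<sigma>. typed ord \<Omega> (t |@ b) \<sigma>)" for b
  have typed_ty: "typed ord \<Omega> (t |@ b) (ty b)" if "b \<in> B" for b
    using typed_at[OF tt B_tdom[OF that]] typed_unique unfolding ty_def by (metis theI)
  have "card F \<le> card (fv t)"
    unfolding F_def B_def using card_fv_stable_prefixes_le[OF wf bn cN] .
  then have "card (F \<times> S) \<le> card (fv t) * card S" by (simp add: card_cartesian_product)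
  then have "card (F \<times> S) < card B" using long by (simp add: B_def)
  moreover have "(\<lambda>b. (fv (t |@ b), ty b)) ` B \<subseteq> F \<times> S"
    using types typed_ty B_tdom by (auto simp: F_def)
  moreover have "finite F" using finite_stable_part[of ord t] by (simp add: F_def B_def)
  ultimately have "\<not> inj_on (\<lambda>b. (fv (t |@ b), ty b)) B"
    using \<open>finite S\<close> card_inj_on_le[of _ B "F \<times> S"] by (meson finite_SigmaI leD)
  then obtain b1 b2 where b12: "b1 \<in> B" "b2 \<in> B" "b1 \<noteq> b2"
    and fv_eq: "fv (t |@ b1) = fv (t |@ b2)" and ty_eq: "ty b1 = ty b2" by (auto simp: inj_on_def)
  have "strict_prefix b1 b2 \<or> strict_prefix b2 b1"
    using prefix_same_cases[of b1 c b2] b12 by (auto simp: B_def strict_prefix_def)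
  then show ?thesis
  proof
    assume "strict_prefix b1 b2"
    then show ?thesis
      by (rule that) (use b12 B_tdom B_App typed_ty[of b1] typed_ty[of b2] fv_eq ty_eq in auto)
  next
    assume "strict_prefix b2 b1"
    then show ?thesis
      by (rule that) (use b12 B_tdom B_App typed_ty[of b1] typed_ty[of b2] fv_eq ty_eq in auto)
  qed
qed

lemma not_locally_compact_repetition:
  assumes inh: "inhabitant ord \<Omega> M \<phi>" and "\<not> locally_compact ord \<Omega> M \<phi>"
  obtains b b' \<sigma> where "strict_prefix b b'" "b' \<in> tdom M"
    "\<exists>P Q. M |@ b = App P Q" "\<exists>P Q. M |@ b' = App P Q"
    "typed ord \<Omega> (M |@ b) \<sigma>" "typed ord \<Omega> (M |@ b') \<sigma>" "fv (M |@ b') = fv (M |@ b)"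
proof -
  from inh have tM: "typed ord \<Omega> M \<phi>" and fvM: "fv M = {}" and bnM: "beta_normal M"
    and wfM: "wf_binders M" by (auto simp: inhabitant_def LambdaNF_def)
  obtain a where a: "a \<in> tdom M"
    and deep: "length (lams M a) * card (Sub \<phi>) < rel_depth (blueprint ord \<Omega> (M |@ a))"
    using assms by (auto simp: locally_compact_def not_le)
  let ?N = "M |@ a"
  obtain c where c: "c \<in> stable_part ord ?N"
    and long: "length (lams M a) * card (Sub \<phi>) < card {b \<in> stable_part ord ?N. strict_prefix b c}"
    using rel_depth_gtE[OF deep] .
  have "fv ?N \<subseteq> set (lams M a)" using fv_at_subset_lams[OF a] fvM by simp
  then have "card (fv ?N) \<le> length (lams M a)"
    using card_mono[of "set (lams M a)"] card_length le_trans by blast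
  then have long': "card (fv ?N) * card (Sub \<phi>) < card {b \<in> stable_part ord ?N. strict_prefix b c}"
    using long by (meson le_less_trans mult_le_mono1)
  have types: "\<sigma> \<in> Sub \<phi>" if "d \<in> tdom ?N" "typed ord \<Omega> (?N |@ d) \<sigma>" for d \<sigma>
    using typed_at_Sub[OF tM bnM, of "a @ d"] that a fvM by (simp add: tdom_append at_append)
  obtain \<tau> where "typed ord \<Omega> ?N \<tau>" using typed_at[OF tM a] ..
  from stable_chain_repetition[OF wf_binders_at[OF wfM a] beta_normal_at[OF bnM a] this c long'
      finite_Sub types]
  obtain b b' \<sigma> where "strict_prefix b b'" "b' \<in> tdom ?N"
    "\<exists>P Q. ?N |@ b = App P Q" "\<exists>P Q. ?N |@ b' = App P Q"
    "typed ord \<Omega> (?N |@ b) \<sigma>" "typed ord \<Omega> (?N |@ b') \<sigma>" "fv (?N |@ b') = fv (?N |@ b)" .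
  moreover have "b \<in> tdom ?N" using calculation(1,2) prefix_in_tdom strict_prefix_def by blast
  moreover have "strict_prefix (a @ b) (a @ b')" using calculation(1) by (auto simp: strict_prefix_def)
  ultimately show ?thesis
    using that[of "a @ b" "a @ b'" \<sigma>] a by (simp add: tdom_append at_append)
qed

theorem lemma3p5:
  fixes ord :: "'v \<Rightarrow> nat" and \<Omega> :: "'v \<Rightarrow> 'a form"
    and M :: "'v trm" and \<phi> :: "'a form"
  assumes "inj ord"
    and "\<forall>\<psi>. infinite (\<Omega> -` {\<psi>})"
    and "inhabitant ord \<Omega> M \<phi>"
    and "\<not> locally_compact ord \<Omega> M \<phi>"
  shows "(\<exists>b b'. b \<in> tdom M \<and> b' \<in> tdom M \<and> strict_prefix b b'
            \<and> same_kind ord \<Omega> (M |@ b) (M |@ b') \<and> Free ord (M |@ b) = Free ord (M |@ b'))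
       \<and> (\<exists>M'. inhabitant ord \<Omega> M' \<phi> \<and> card (tdom M') < card (tdom M))"
proof -
  obtain b b' \<sigma> where b: "strict_prefix b b'" "b' \<in> tdom M"
    and App: "\<exists>P Q. M |@ b = App P Q" "\<exists>P Q. M |@ b' = App P Q"
    and typed: "typed ord \<Omega> (M |@ b) \<sigma>" "typed ord \<Omega> (M |@ b') \<sigma>"
    and fv_eq: "fv (M |@ b') = fv (M |@ b)"
    using not_locally_compact_repetition[OF assms(3,4)] .
  have "b \<in> tdom M" using b prefix_in_tdom strict_prefix_def by blast
  moreover have "same_kind ord \<Omega> (M |@ b) (M |@ b')"
    using App typed by (auto simp: same_kind_def)
  moreover have "Free ord (M |@ b) = Free ord (M |@ b')"
    using Free_eqI[OF assms(1) fv_eq[symmetric]] .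
  moreover have "inhabitant ord \<Omega> (replace_at M b (M |@ b')) \<phi>"
    using inhabitant_replace_at[OF assms(3) b(2)] b(1) App typed fv_eq
    by (auto simp: strict_prefix_def)
  ultimately show ?thesis
    using b card_tdom_replace_at_less[OF b] by blast
qed

end
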